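(* For all integers $m,k\ge 0$, \begin{align*} \zeta(\bar 1,\{1\}_m,\bar 1,\bar 1,\{1\}_k)=&\frac{(-1)^k}{(m+1)!(k+1)!}\Big\{(k+1)(\ln 2)^{m+1}I(k)-(m+k+2)I(m+k+1)\Big\}\\ &-\sum_{i=1}^{m}\frac{(\ln 2)^i}{i!}\zeta(\bar 1,\{1\}_{m-i},\bar 1,\bar 1,\{1\}_k), \end{align*} where for integers $k\ge1$, $I(k):=\int_0^1\frac{\ln^k(1+x)\ln(1-x)}{1+x}\,dx$, and $I(0):=\frac{\ln^2(2)-\zeta(2)}{2}$.
   Context: For nonzero integers $s_1,\dots,s_k$, with $\operatorname{sgn}(s)=1$ if $s>0$ and $-1$ if $s<0$, the multiple zeta value is $\zeta(s_1,\dots,s_k)=\sum_{n_1>n_2>\cdots>n_k\ge 1}\prod_{j=1}^k n_j^{-|s_j|}\operatorname{sgn}(s_j)^{n_j}$. A barred entry $\bar p$ denotes the negative entry $-p$. The notation $\{1\}_d$ means the entry $1$ repeated $d$ times ($d=0$ means no entries). $\zeta(2)=\sum_{n\ge1}n^{-2}$. *)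

theory Defs
  imports "HOL-Analysis.Analysis"
begin

text \<open>Truncated alternating multiple zeta sum: sum over N >= n_1 > n_2 > ... > n_k >= 1
  of the product of sgn(s_j)^(n_j) / n_j^(abs s_j).\<close>
fun mzv_trunc :: "int list \<Rightarrow> nat \<Rightarrow> real" where
  "mzv_trunc [] N = 1"
| "mzv_trunc (s # ss) N =
     (\<Sum>n\<in>{1..N}. (real_of_int (sgn s)) ^ n / real n ^ nat \<bar>s\<bar> * mzv_trunc ss (n - 1))"

definition mzv :: "int list \<Rightarrow> real" where
  "mzv ss = lim (\<lambda>N. mzv_trunc ss N)"

definition zeta2 :: real where
  "zeta2 = (\<Sum>n. 1 / real (Suc n) ^ 2)"

definition Iint :: "nat \<Rightarrow> real" where
  "Iint k = (if k = 0 then (ln 2 ^ 2 - zeta2) / 2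
             else integral {0..1} (\<lambda>x::real. ln (1 + x) ^ k * ln (1 - x) / (1 + x)))"

end

theory Submission
  imports Defs "HOL-Probability.Characteristic_Functions"
begin

(* For a sign list r, the generating function mzv_gf s r x = sum_n c_n x^n of the outer
   summands c_n of zeta(s, r) obeys d/dx mzv_gf s (t # r) = s / (1 - s x) * mzv_gf (s t) r,
   so differentiation strips the leading entry. Working upwards from the tail this gives
   closed forms in ln(1 + x), ln(1 - x) and the incomplete integrals
   I(n, x) = integral from 0 to x of ln^n(1 + t) ln(1 - t) / (1 + t), and it shows that the
   identity of the theorem with ln 2 replaced by ln(1 + x) holds on [0, 1): both sides vanish
   at 0 and have the same derivative, the left-hand sum telescoping. Since the defining series
   of zeta(-1, r) converges, Abel's limit theorem lets x tend to 1. *)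

section \<open>Convergence of the defining series\<close>

definition mzv_coeff :: "int \<Rightarrow> int list \<Rightarrow> nat \<Rightarrow> real" where
  "mzv_coeff s r n =
     (if n = 0 then 0 else real_of_int (sgn s) ^ n / real n ^ nat \<bar>s\<bar> * mzv_trunc r (n - 1))"

lemma mzv_trunc_Cons_eq_sum_coeff: "mzv_trunc (s # r) N = (\<Sum>n\<le>N. mzv_coeff s r n)"
  by (induction N) (simp_all add: mzv_coeff_def)

lemma mzv_coeff_sums_mzv:
  assumes "summable (mzv_coeff s r)"
  shows "mzv_coeff s r sums mzv (s # r)"
proof -
  obtain L where L: "mzv_coeff s r sums L" using assms by (auto simp: summable_def)
  then have "mzv_trunc (s # r) \<longlonglongrightarrow> L"
    using LIMSEQ_Suc[OF L[unfolded sums_def]]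
    by (simp add: mzv_trunc_Cons_eq_sum_coeff[abs_def] lessThan_Suc_atMost)
  then show ?thesis using L unfolding mzv_def by (simp add: limI)
qed

lemma abs_mzv_coeff_Suc:
  assumes "s \<in> {1, -1}"
  shows "\<bar>mzv_coeff s r (Suc n)\<bar> = \<bar>mzv_trunc r n\<bar> / real (Suc n)"
  using assms by (auto simp: mzv_coeff_def abs_mult power_abs)

lemma abs_mzv_trunc_le_harm_power:
  assumes "set ss \<subseteq> {1, -1}"
  shows "\<bar>mzv_trunc ss n\<bar> \<le> harm n ^ length ss"
  using assms
proof (induction ss arbitrary: n)
  case Nil
  then show ?case by simp
next
  case (Cons s r)
  have "\<bar>mzv_trunc (s # r) n\<bar> \<le> (\<Sum>j\<le>n. \<bar>mzv_coeff s r j\<bar>)"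
    unfolding mzv_trunc_Cons_eq_sum_coeff by (rule sum_abs)
  also have "\<dots> \<le> (\<Sum>j\<le>n. inverse (real j) * harm n ^ length r)"
  proof (rule sum_mono)
    fix j assume "j \<in> {..n}"
    then show "\<bar>mzv_coeff s r j\<bar> \<le> inverse (real j) * harm n ^ length r"
    proof (cases j)
      case (Suc i)
      have "\<bar>mzv_trunc r i\<bar> \<le> harm i ^ length r" using Cons by simp
      also have "\<dots> \<le> harm n ^ length r"
        using \<open>j \<in> {..n}\<close> Suc by (intro power_mono harm_mono harm_nonneg) simp
      finally show ?thesis
        using Cons.prems Suc by (simp add: abs_mzv_coeff_Suc divide_inverse mult.commute mult_left_mono)
    qed (simp add: mzv_coeff_def)
  qed
  also have "\<dots> = harm n ^ length (s # r)"
    by (simp add: harm_def sum_distrib_right atMost_atLeast0 sum.atLeast_Suc_atMost)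
  finally show ?case .
qed

lemma harm_le_one_plus_ln: "harm n \<le> 1 + ln (real n + 1)"
proof -
  have "harm (Suc n) - ln (real (Suc n)) \<le> harm (Suc 0) - ln (real (Suc 0))"
    using decseq_harm_diff_ln unfolding decseq_def by (metis zero_le)
  moreover have "harm (Suc 0) = (1 :: real)" by (simp add: harm_def)
  moreover have "harm n \<le> (harm (Suc n) :: real)" by (rule harm_mono) simp
  ultimately show ?thesis by (simp add: add.commute)
qed

lemma one_plus_ln_power_le_sqrt:
  assumes y: "y \<ge> 1"
  shows "(1 + ln y) ^ l \<le> (1 + 2 * real l) ^ l * sqrt y"
proof (cases "l = 0")
  case True
  then show ?thesis using y by simp
next
  case False
  define z where "z = y powr (1 / (2 * real l))"
  have z: "z \<ge> 1" unfolding z_def using y False by (simp add: ge_one_powr_ge_zero)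
  have "ln y = 2 * real l * ln z" unfolding z_def using y False by (simp add: ln_powr)
  also have "\<dots> \<le> 2 * real l * (z - 1)" using z by (intro mult_left_mono ln_le_minus_one) auto
  finally have "1 + ln y \<le> (1 + 2 * real l) * z" using z by (simp add: algebra_simps)
  then have "(1 + ln y) ^ l \<le> ((1 + 2 * real l) * z) ^ l" using y by (intro power_mono) simp_all
  also have "\<dots> = (1 + 2 * real l) ^ l * sqrt y"
    unfolding z_def power_mult_distrib using y False
    by (simp add: powr_realpow [symmetric] powr_powr powr_half_sqrt)
  finally show ?thesis .
qed

lemma abs_mzv_trunc_le_sqrt:
  assumes "set ss \<subseteq> {1, -1}"
  shows "\<bar>mzv_trunc ss n\<bar> \<le> (1 + 2 * real (length ss)) ^ length ss * sqrt (real n + 1)"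
proof -
  have "\<bar>mzv_trunc ss n\<bar> \<le> harm n ^ length ss" using assms by (rule abs_mzv_trunc_le_harm_power)
  also have "\<dots> \<le> (1 + ln (real n + 1)) ^ length ss"
    by (intro power_mono harm_le_one_plus_ln harm_nonneg)
  also have "\<dots> \<le> (1 + 2 * real (length ss)) ^ length ss * sqrt (real n + 1)"
    by (rule one_plus_ln_power_le_sqrt) simp
  finally show ?thesis .
qed

lemma mzv_trunc_increment_le:
  assumes "set r \<subseteq> {1, -1}"
  obtains D where "\<And>n. \<bar>mzv_trunc r (Suc n) - mzv_trunc r n\<bar> \<le> D / sqrt (real n + 1)"
proof (cases r)
  case Nil
  then show ?thesis using that[of 0] by simp
next
  case (Cons s r')
  define D where "D = (1 + 2 * real (length r')) ^ length r'"
  have "\<bar>mzv_trunc r (Suc n) - mzv_trunc r n\<bar> \<le> D / sqrt (real n + 1)" for n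
  proof -
    have s: "s \<in> {1, -1}" and r': "set r' \<subseteq> {1, -1}" using assms Cons by auto
    have "mzv_trunc r (Suc n) - mzv_trunc r n = mzv_coeff s r' (Suc n)"
      unfolding Cons mzv_trunc_Cons_eq_sum_coeff by simp
    then have "\<bar>mzv_trunc r (Suc n) - mzv_trunc r n\<bar> = \<bar>mzv_trunc r' n\<bar> / (real n + 1)"
      using abs_mzv_coeff_Suc[OF s, of r' n] by simp
    also have "\<dots> \<le> D * sqrt (real n + 1) / (real n + 1)"
      unfolding D_def by (intro divide_right_mono abs_mzv_trunc_le_sqrt r') simp
    also have "\<dots> = D / sqrt (real n + 1)"
      by (simp add: field_simps flip: real_sqrt_mult)
    finally show ?thesis .
  qed
  then show ?thesis by (rule that)
qed

lemma summable_if_summable_pairs: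
  fixes a :: "nat \<Rightarrow> 'a :: real_normed_vector"
  assumes pairs: "summable (\<lambda>j. a (2 * j) + a (2 * j + 1))" and a: "a \<longlonglongrightarrow> 0"
  shows "summable a"
proof -
  define S where "S = (\<Sum>j. a (2 * j) + a (2 * j + 1))"
  have even: "(\<lambda>n. \<Sum>i<2 * n. a i) \<longlonglongrightarrow> S"
  proof -
    have "(\<Sum>i<2 * n. a i) = (\<Sum>j<n. a (2 * j) + a (2 * j + 1))" for n
      by (induction n) (simp_all add: algebra_simps)
    then show ?thesis using summable_LIMSEQ[OF pairs] by (simp add: S_def)
  qed
  have "(\<lambda>n. a (2 * n)) \<longlonglongrightarrow> 0"
    using LIMSEQ_subseq_LIMSEQ[OF a, of "(*) 2"] by (simp add: strict_mono_def o_def)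
  with even have "(\<lambda>n. (\<Sum>i<2 * n. a i) + a (2 * n)) \<longlonglongrightarrow> S + 0" by (rule tendsto_add)
  then have "(\<lambda>n. \<Sum>i<2 * n + 1. a i) \<longlonglongrightarrow> S" by simp
  with even have "(\<lambda>n. \<Sum>i<n. a i) \<longlonglongrightarrow> S" by (rule limseq_even_odd)
  then show ?thesis by (auto simp: summable_def sums_def)
qed

lemma abs_diff_quotients_le:
  fixes y u v C D :: real
  assumes y: "y > 0" and uv: "\<bar>v - u\<bar> \<le> D / sqrt y" and u: "\<bar>u\<bar> \<le> C * sqrt y"
  shows "\<bar>v / (y + 1) - u / y\<bar> \<le> (C + D) / (sqrt y * (y + 1))"
proof -
  have y1: "y + 1 > 0" using y by simp
  have "v / (y + 1) - u / y = (v - u) / (y + 1) - u / (y * (y + 1))"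
    using y y1 by (simp add: divide_simps) (simp add: algebra_simps)
  also have "\<bar>\<dots>\<bar> \<le> \<bar>v - u\<bar> / (y + 1) + \<bar>u\<bar> / (y * (y + 1))"
    using y y1 by (intro order_trans[OF abs_triangle_ineq4]) (simp add: abs_divide abs_mult)
  also have "\<dots> \<le> D / sqrt y / (y + 1) + C * sqrt y / (y * (y + 1))"
    using y by (intro add_mono divide_right_mono uv u) simp_all
  also have "C * sqrt y / (y * (y + 1)) = C / (sqrt y * (y + 1))"
  proof -
    have "C * s / (s * s * z) = C / (s * z)" if "s > 0" for s z :: real
      using that by (simp add: divide_simps)
    from this[of "sqrt y" "y + 1"] show ?thesis using y by simp
  qed
  finally show ?thesis by (simp add: add_divide_distrib)
qed

(* The terms have size about ln^d n / n, so the series converges only conditionally;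
   consecutive terms of opposite sign nearly cancel, leaving pairs of size O(j powr (-3/2)). *)
lemma summable_mzv_coeff_neg:
  assumes r: "set r \<subseteq> {1, -1}"
  shows "summable (mzv_coeff (-1) r)"
proof -
  define T where "T = mzv_trunc r"
  define C where "C = (1 + 2 * real (length r)) ^ length r"
  have T: "\<bar>T n\<bar> \<le> C * sqrt (real n + 1)" for n
    unfolding T_def C_def using r by (rule abs_mzv_trunc_le_sqrt)
  obtain D where D: "\<And>n. \<bar>T (Suc n) - T n\<bar> \<le> D / sqrt (real n + 1)"
    using mzv_trunc_increment_le[OF r] unfolding T_def by blast
  define b where "b n = mzv_coeff (-1) r (Suc n)" for n
  have b_even: "b (2 * j) = - T (2 * j) / (2 * real j + 1)"
    and b_odd: "b (2 * j + 1) = T (2 * j + 1) / (2 * real j + 2)" for j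
    by (simp_all add: b_def mzv_coeff_def T_def)
  have "summable (\<lambda>j. b (2 * j) + b (2 * j + 1))"
  proof (rule summable_comparison_test')
    define w where "w j = 1 / (sqrt (2 * real j + 1) * (2 * real j + 2))" for j
    have "w \<in> O(\<lambda>j. real j powr (-3/2))" unfolding w_def by real_asymp
    then have "summable w"
      by (rule summable_comparison_test_bigo[rotated]) (simp add: summable_real_powr_iff)
    then show "summable (\<lambda>j. (C + D) * w j)" by (rule summable_mult)
    fix j :: nat assume "j \<ge> 0"
    have "\<bar>T (2 * j + 1) / ((2 * real j + 1) + 1) - T (2 * j) / (2 * real j + 1)\<bar>
        \<le> (C + D) / (sqrt (2 * real j + 1) * ((2 * real j + 1) + 1))"
      using D[of "2 * j"] T[of "2 * j"] by (intro abs_diff_quotients_le) simp_all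
    then show "norm (b (2 * j) + b (2 * j + 1)) \<le> (C + D) * w j"
      unfolding b_even b_odd w_def by (simp add: add.assoc)
  qed
  moreover have "b \<longlonglongrightarrow> 0"
  proof (rule Lim_null_comparison)
    show "eventually (\<lambda>n. norm (b n) \<le> C * sqrt (real n + 1) / (real n + 1)) sequentially"
      using T by (intro always_eventually allI)
        (simp add: b_def abs_mzv_coeff_Suc T_def divide_right_mono add.commute)
    show "(\<lambda>n. C * sqrt (real n + 1) / (real n + 1)) \<longlonglongrightarrow> 0" by real_asymp
  qed
  ultimately have "summable b" by (rule summable_if_summable_pairs)
  then show ?thesis unfolding b_def by (rule summable_Suc_iff[THEN iffD1])
qed

section \<open>Abel's limit theorem\<close>

lemma powser_sums_partial_sums_powser:
  fixes a :: "nat \<Rightarrow> 'a :: {real_normed_field, banach}"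
  assumes "summable (\<lambda>N. (\<Sum>n\<le>N. a n) * x ^ N)"
  shows "(\<lambda>n. a n * x ^ n) sums ((1 - x) * (\<Sum>N. (\<Sum>n\<le>N. a n) * x ^ N))"
proof -
  define t where "t N = (\<Sum>n\<le>N. a n)" for N
  define Q where "Q = (\<Sum>N. t N * x ^ N)"
  have Q: "(\<lambda>N. t N * x ^ N) sums Q" using assms unfolding Q_def t_def by (rule summable_sums)
  define f where "f N = (if N = 0 then 0 else t (N - 1) * x ^ N)" for N
  have "(\<lambda>N. f (Suc N)) sums (x * Q)"
    using sums_mult[OF Q, of x] by (simp add: f_def algebra_simps)
  then have "f sums (x * Q)" by (subst (asm) sums_Suc_iff) (simp add: f_def)
  with Q have "(\<lambda>N. t N * x ^ N - f N) sums (Q - x * Q)" by (rule sums_diff)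
  moreover have "t N * x ^ N - f N = a N * x ^ N" for N
    by (cases N) (simp_all add: t_def f_def algebra_simps)
  ultimately show ?thesis by (simp add: Q_def t_def algebra_simps)
qed

lemma abs_powser_le_head_plus_tail:
  fixes c :: "nat \<Rightarrow> real"
  assumes x: "0 < x" "x < 1" and tail: "\<And>n. n \<ge> N \<Longrightarrow> \<bar>c n\<bar> \<le> e"
  shows "\<bar>\<Sum>n. c n * x ^ n\<bar> \<le> (\<Sum>n<N. \<bar>c n\<bar>) + e / (1 - x)"
proof -
  have e: "e \<ge> 0" using tail[of N] by simp
  define g where "g n = (if n < N then \<bar>c n\<bar> else 0) + e * x ^ n" for n
  have "(\<lambda>n. if n < N then \<bar>c n\<bar> else 0) sums (\<Sum>n<N. if n < N then \<bar>c n\<bar> else 0)"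
    by (rule sums_finite) auto
  then have "(\<lambda>n. if n < N then \<bar>c n\<bar> else 0) sums (\<Sum>n<N. \<bar>c n\<bar>)" by simp
  then have g: "g sums ((\<Sum>n<N. \<bar>c n\<bar>) + e * (1 / (1 - x)))"
    unfolding g_def using x by (intro sums_add sums_mult geometric_sums) auto
  have bound: "\<bar>c n * x ^ n\<bar> \<le> g n" for n
  proof (cases "n < N")
    case True
    have "\<bar>c n\<bar> * x ^ n \<le> \<bar>c n\<bar>" using x by (intro mult_left_le power_le_one) auto
    moreover have "0 \<le> e * x ^ n" using e x by simp
    ultimately show ?thesis using True x by (simp add: g_def abs_mult)
  next
    case False
    then show ?thesis using tail[of n] x by (simp add: g_def abs_mult mult_right_mono)
  qed
  have "summable (\<lambda>n. \<bar>c n * x ^ n\<bar>)"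
    by (rule summable_comparison_test'[OF sums_summable[OF g]]) (use bound in simp)
  then have "\<bar>\<Sum>n. c n * x ^ n\<bar> \<le> (\<Sum>n. \<bar>c n * x ^ n\<bar>)" by (rule summable_rabs)
  also have "\<dots> \<le> suminf g"
    by (rule suminf_le[OF bound \<open>summable (\<lambda>n. \<bar>c n * x ^ n\<bar>)\<close> sums_summable[OF g]])
  also have "\<dots> = (\<Sum>n<N. \<bar>c n\<bar>) + e / (1 - x)" using g by (simp add: sums_iff)
  finally show ?thesis .
qed

lemma one_minus_times_powser_tendsto_0:
  fixes c :: "nat \<Rightarrow> real"
  assumes c: "c \<longlonglongrightarrow> 0"
  shows "((\<lambda>x. (1 - x) * (\<Sum>n. c n * x ^ n)) \<longlongrightarrow> 0) (at_left 1)"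
proof (rule tendstoI)
  fix e :: real assume e: "e > 0"
  obtain N where N: "\<And>n. n \<ge> N \<Longrightarrow> \<bar>c n\<bar> < e / 2"
    using LIMSEQ_D[OF c, of "e / 2"] e by auto
  define M where "M = (\<Sum>n<N. \<bar>c n\<bar>)"
  have M: "M \<ge> 0" unfolding M_def by (simp add: sum_nonneg)
  have "eventually (\<lambda>x. x \<in> {max 0 (1 - e / (2 * (M + 1)))<..<1}) (at_left (1::real))"
    using e M by (intro eventually_at_left_real) (simp add: field_simps)
  then show "eventually (\<lambda>x. dist ((1 - x) * (\<Sum>n. c n * x ^ n)) 0 < e) (at_left 1)"
  proof (rule eventually_mono)
    fix x :: real assume "x \<in> {max 0 (1 - e / (2 * (M + 1)))<..<1}"
    then have x: "0 < x" "x < 1" and x_close: "(1 - x) * (M + 1) < e / 2"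
      using M by (auto simp: field_simps)
    have "\<bar>\<Sum>n. c n * x ^ n\<bar> \<le> M + e / 2 / (1 - x)"
      unfolding M_def using x N by (intro abs_powser_le_head_plus_tail less_imp_le) auto
    then have "(1 - x) * \<bar>\<Sum>n. c n * x ^ n\<bar> \<le> (1 - x) * (M + e / 2 / (1 - x))"
      using x by (intro mult_left_mono) auto
    also have "\<dots> = (1 - x) * M + e / 2" using x by (simp add: field_simps)
    also have "\<dots> < e" using mult_left_mono[of M "M + 1" "1 - x"] x x_close by linarith
    finally show "dist ((1 - x) * (\<Sum>n. c n * x ^ n)) 0 < e"
      using x by (simp add: dist_real_def abs_mult)
  qed
qed

lemma Abel_limit_theorem:
  fixes a :: "nat \<Rightarrow> real"
  assumes "a sums A"
  shows "((\<lambda>x. \<Sum>n. a n * x ^ n) \<longlongrightarrow> A) (at_left 1)"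
proof -
  define c where "c N = (\<Sum>n\<le>N. a n) - A" for N
  have "(\<lambda>N. \<Sum>n<Suc N. a n) \<longlonglongrightarrow> A" using assms unfolding sums_def by (rule LIMSEQ_Suc)
  then have c: "c \<longlonglongrightarrow> 0"
    unfolding c_def using tendsto_diff[OF _ tendsto_const, of _ A sequentially A]
    by (simp add: lessThan_Suc_atMost)
  then obtain B where B: "\<And>N. \<bar>c N\<bar> \<le> B"
    using convergent_imp_Bseq[of c] unfolding convergent_def Bseq_def by fastforce
  have "(\<Sum>n. a n * x ^ n) = (1 - x) * (\<Sum>N. c N * x ^ N) + A" if x: "0 < x" "x < 1" for x
  proof -
    have geom: "(\<lambda>N. x ^ N) sums (1 / (1 - x))" using x by (intro geometric_sums) simp
    have "summable (\<lambda>N. c N * x ^ N)"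
    proof (rule summable_comparison_test')
      show "summable (\<lambda>N. B * x ^ N)" using geom by (intro summable_mult sums_summable)
      show "norm (c N * x ^ N) \<le> B * x ^ N" for N
        using B[of N] x by (simp add: abs_mult mult_right_mono)
    qed
    then have "(\<lambda>N. c N * x ^ N + A * x ^ N) sums ((\<Sum>N. c N * x ^ N) + A * (1 / (1 - x)))"
      using geom by (intro sums_add sums_mult summable_sums)
    then have "(\<lambda>N. (\<Sum>n\<le>N. a n) * x ^ N) sums ((\<Sum>N. c N * x ^ N) + A / (1 - x))"
      by (simp add: c_def algebra_simps)
    then have "(\<lambda>n. a n * x ^ n) sums ((1 - x) * ((\<Sum>N. c N * x ^ N) + A / (1 - x)))"
      using powser_sums_partial_sums_powser[of a x] by (simp add: sums_iff)
    then have "(\<Sum>n. a n * x ^ n) = (1 - x) * ((\<Sum>N. c N * x ^ N) + A / (1 - x))"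
      by (rule sums_unique[symmetric])
    also have "\<dots> = (1 - x) * (\<Sum>N. c N * x ^ N) + A" using x by (simp add: distrib_left)
    finally show ?thesis .
  qed
  then have "eventually (\<lambda>x. (1 - x) * (\<Sum>N. c N * x ^ N) + A = (\<Sum>n. a n * x ^ n)) (at_left 1)"
    by (intro eventually_mono[OF eventually_at_left_real[of 0 1]]) auto
  moreover have "((\<lambda>x. (1 - x) * (\<Sum>N. c N * x ^ N) + A) \<longlongrightarrow> 0 + A) (at_left 1)"
    by (intro tendsto_add one_minus_times_powser_tendsto_0 c tendsto_const)
  ultimately show ?thesis by (simp add: tendsto_cong)
qed

section \<open>Generating functions\<close>

definition mzv_gf :: "int \<Rightarrow> int list \<Rightarrow> real \<Rightarrow> real" where
  "mzv_gf s r x = (\<Sum>n. mzv_coeff s r n * x ^ n)"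

lemma abs_mzv_coeff_le:
  assumes "s \<in> {1, -1}" and "set r \<subseteq> {1, -1}"
  shows "\<bar>mzv_coeff s r n\<bar> \<le> (1 + 2 * real (length r)) ^ length r"
proof (cases n)
  case 0
  then show ?thesis by (simp add: mzv_coeff_def)
next
  case (Suc m)
  define C where "C = (1 + 2 * real (length r)) ^ length r"
  have "\<bar>mzv_coeff s r n\<bar> \<le> C * sqrt (real m + 1) / (real m + 1)"
    using Suc assms abs_mzv_trunc_le_sqrt[of r m]
    by (simp add: abs_mzv_coeff_Suc C_def divide_right_mono add.commute)
  also have "\<dots> \<le> C"
    using real_sqrt_le_mono[of "real m + 1" "(real m + 1)\<^sup>2"] unfolding C_def
    by (simp add: divide_le_eq mult_left_mono power2_eq_square)
  finally show ?thesis by (simp add: C_def)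
qed

lemma summable_mzv_gf:
  assumes "s \<in> {1, -1}" and "set r \<subseteq> {1, -1}" and "\<bar>x\<bar> < 1"
  shows "summable (\<lambda>n. mzv_coeff s r n * x ^ n)"
proof (rule summable_comparison_test')
  define C where "C = (1 + 2 * real (length r)) ^ length r"
  show "summable (\<lambda>n. C * \<bar>x\<bar> ^ n)" using assms(3) by (intro summable_mult summable_geometric) simp
  show "norm (mzv_coeff s r n * x ^ n) \<le> C * \<bar>x\<bar> ^ n" for n
    using abs_mzv_coeff_le[OF assms(1,2), of n]
    by (simp add: C_def abs_mult power_abs mult_right_mono)
qed

lemma diffs_mzv_coeff:
  assumes "s \<in> {1, -1}"
  shows "diffs (mzv_coeff s r) n = real_of_int s ^ Suc n * mzv_trunc r n"
  using assms by (auto simp: diffs_def mzv_coeff_def)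

lemma mzv_gf_has_derivative:
  assumes "s \<in> {1, -1}" and "set r \<subseteq> {1, -1}" and "\<bar>x\<bar> < 1"
  shows "(mzv_gf s r has_field_derivative
            (\<Sum>n. real_of_int s ^ Suc n * mzv_trunc r n * x ^ n)) (at x)"
    and "summable (\<lambda>n. real_of_int s ^ Suc n * mzv_trunc r n * x ^ n)"
proof -
  have "((\<lambda>x. \<Sum>n. mzv_coeff s r n * x ^ n) has_field_derivative
          (\<Sum>n. diffs (mzv_coeff s r) n * x ^ n)) (at x)"
    by (rule termdiffs_strong'[where K = 1]) (use summable_mzv_gf[OF assms(1,2)] assms(3) in auto)
  then show "(mzv_gf s r has_field_derivative
               (\<Sum>n. real_of_int s ^ Suc n * mzv_trunc r n * x ^ n)) (at x)"
    unfolding mzv_gf_def[abs_def] diffs_mzv_coeff[OF assms(1)] .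
  have "summable (\<lambda>n. diffs (mzv_coeff s r) n * x ^ n)"
    by (rule termdiff_converges[where K = 1]) (use summable_mzv_gf[OF assms(1,2)] assms(3) in auto)
  then show "summable (\<lambda>n. real_of_int s ^ Suc n * mzv_trunc r n * x ^ n)"
    unfolding diffs_mzv_coeff[OF assms(1)] .
qed

lemma mzv_gf_at_0 [simp]: "mzv_gf s r 0 = 0"
  unfolding mzv_gf_def using powser_sums_zero[of "mzv_coeff s r"]
  by (simp add: sums_iff mzv_coeff_def)

lemma continuous_on_mzv_gf:
  assumes "s \<in> {1, -1}" and "set r \<subseteq> {1, -1}" and "0 \<le> x" "x < 1"
  shows "continuous_on {0..x} (mzv_gf s r)"
proof (intro continuous_at_imp_continuous_on ballI)
  fix t assume "t \<in> {0..x}"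
  then have "\<bar>t\<bar> < 1" using assms by auto
  then show "isCont (mzv_gf s r) t" by (rule DERIV_isCont[OF mzv_gf_has_derivative(1)[OF assms(1,2)]])
qed

lemma mzv_gf_Nil_has_derivative:
  assumes "s \<in> {1, -1}" and "\<bar>x\<bar> < 1"
  shows "(mzv_gf s [] has_field_derivative real_of_int s / (1 - real_of_int s * x)) (at x)"
proof -
  have sx: "norm (real_of_int s * x) < 1" using assms by (auto simp: abs_mult)
  have "(\<Sum>n. real_of_int s ^ Suc n * mzv_trunc [] n * x ^ n)
      = (\<Sum>n. real_of_int s * (real_of_int s * x) ^ n)"
    by (simp add: power_mult_distrib mult.assoc)
  also have "\<dots> = real_of_int s / (1 - real_of_int s * x)"
    using suminf_mult[OF summable_geometric[OF sx]] suminf_geometric[OF sx] by simp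
  finally show ?thesis using mzv_gf_has_derivative(1)[OF assms(1) _ assms(2), of "[]"] by simp
qed

lemma mzv_coeff_times_sign_power:
  assumes "s \<in> {1, -1}" and "t \<in> {1, -1}"
  shows "mzv_coeff t r n * real_of_int s ^ n = mzv_coeff (s * t) r n"
  using assms by (auto simp: mzv_coeff_def power_mult_distrib)

lemma mzv_gf_Cons_has_derivative:
  assumes s: "s \<in> {1, -1}" and t: "t \<in> {1, -1}" and r: "set r \<subseteq> {1, -1}" and x: "\<bar>x\<bar> < 1"
  shows "(mzv_gf s (t # r) has_field_derivative
           real_of_int s / (1 - real_of_int s * x) * mzv_gf (s * t) r x) (at x)"
proof -
  define T where "T = mzv_trunc (t # r)"
  define y where "y = real_of_int s * x"
  have tr: "set (t # r) \<subseteq> {1, -1}" using t r by simp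
  have ss: "real_of_int s * real_of_int s = 1" using s by auto
  have y: "\<bar>y\<bar> < 1" using s x by (auto simp: y_def)
  have deriv_term: "real_of_int s ^ Suc n * T n * x ^ n = real_of_int s * (T n * y ^ n)" for n
    by (simp add: y_def power_mult_distrib algebra_simps)
  have "summable (\<lambda>n. real_of_int s * (real_of_int s ^ Suc n * T n * x ^ n))"
    using mzv_gf_has_derivative(2)[OF s tr x] unfolding T_def by (rule summable_mult)
  then have sT: "summable (\<lambda>n. T n * y ^ n)"
    unfolding deriv_term by (simp add: mult.assoc[symmetric] ss)
  define Q where "Q = (\<Sum>n. T n * y ^ n)"
  have "(\<lambda>n. mzv_coeff t r n * y ^ n) sums ((1 - y) * Q)"
    using powser_sums_partial_sums_powser[of "mzv_coeff t r" y] sT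
    unfolding Q_def T_def mzv_trunc_Cons_eq_sum_coeff by simp
  moreover have "mzv_coeff t r n * y ^ n = mzv_coeff (s * t) r n * x ^ n" for n
    using mzv_coeff_times_sign_power[OF s t, of r n, symmetric]
    by (simp add: y_def power_mult_distrib)
  ultimately have "mzv_gf (s * t) r x = (1 - y) * Q"
    unfolding mzv_gf_def by (simp add: sums_iff)
  then have "Q = mzv_gf (s * t) r x / (1 - y)" using y by (simp add: field_simps)
  moreover have "(\<Sum>n. real_of_int s ^ Suc n * T n * x ^ n) = real_of_int s * Q"
    unfolding deriv_term Q_def by (rule suminf_mult[OF sT])
  ultimately show ?thesis
    using mzv_gf_has_derivative(1)[OF s tr x] unfolding T_def y_def by simp
qed

section \<open>Closed forms on the interval [0, 1)\<close>

lemma eq_if_same_derivative_on_unit_interval: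
  fixes f g d :: "real \<Rightarrow> real"
  assumes x: "0 \<le> x" "x < 1" and f0: "f 0 = g 0"
    and cf: "continuous_on {0..x} f" and cg: "continuous_on {0..x} g"
    and df: "\<And>t. 0 < t \<Longrightarrow> t < 1 \<Longrightarrow> (f has_real_derivative d t) (at t)"
    and dg: "\<And>t. 0 < t \<Longrightarrow> t < 1 \<Longrightarrow> (g has_real_derivative d t) (at t)"
  shows "f x = g x"
proof (cases "x = 0")
  case True
  then show ?thesis using f0 by simp
next
  case False
  then have "0 < x" using x by simp
  have "(\<lambda>t. f t - g t) x = (\<lambda>t. f t - g t) 0"
  proof (rule DERIV_isconst_end[OF \<open>0 < x\<close>])
    show "continuous_on {0..x} (\<lambda>t. f t - g t)" by (intro continuous_intros cf cg)
    show "((\<lambda>t. f t - g t) has_real_derivative 0) (at t)" if "0 < t" "t < x" for t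
      using DERIV_diff[OF df dg, of t] that x by simp
  qed
  then show ?thesis using f0 by simp
qed

definition Iint_partial :: "nat \<Rightarrow> real \<Rightarrow> real" where
  "Iint_partial n x = integral {0..x} (\<lambda>t. ln (1 + t) ^ n * ln (1 - t) / (1 + t))"

lemma Iint_partial_0 [simp]: "Iint_partial n 0 = 0"
  by (simp add: Iint_partial_def)

lemma continuous_on_Iint_integrand:
  "b < 1 \<Longrightarrow> continuous_on {0..b} (\<lambda>t::real. ln (1 + t) ^ n * ln (1 - t) / (1 + t))"
  by (intro continuous_intros) auto

lemma continuous_on_Iint_partial: "x < 1 \<Longrightarrow> continuous_on {0..x} (Iint_partial n)"
  unfolding Iint_partial_def[abs_def]
  by (intro indefinite_integral_continuous_1 integrable_continuous_real continuous_on_Iint_integrand)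

lemma Iint_partial_has_derivative:
  assumes "0 < t" "t < 1"
  shows "(Iint_partial n has_real_derivative (ln (1 + t) ^ n * ln (1 - t) / (1 + t))) (at t)"
proof -
  define b where "b = (1 + t) / 2"
  have b: "t < b" "b < 1" using assms by (auto simp: b_def)
  have "(Iint_partial n has_real_derivative (ln (1 + t) ^ n * ln (1 - t) / (1 + t))) (at t within {0..b})"
    unfolding Iint_partial_def[abs_def]
    by (rule integral_has_real_derivative[OF continuous_on_Iint_integrand[OF b(2)]]) (use assms b in auto)
  moreover have "at t within {0..b} = at t"
    by (rule at_within_interior) (use assms b in auto)
  ultimately show ?thesis by simp
qed

lemma ln_one_plus_power_has_derivative:
  assumes "t > -1"
  shows "((\<lambda>x. ln (1 + x) ^ Suc n / fact (Suc n)) has_real_derivative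
           ln (1 + t) ^ n / fact n / (1 + t)) (at t)"
proof -
  have "((\<lambda>x. ln (1 + x)) has_real_derivative 1 / (1 + t)) (at t)"
    using assms by (auto intro!: derivative_eq_intros)
  from DERIV_cdivide[OF DERIV_power[OF this, of "Suc n"], of "fact (Suc n)"] show ?thesis
    by (simp add: fact_Suc mult_ac)
qed

lemma mzv_gf_neg_ones:
  assumes "0 \<le> x" "x < 1"
  shows "mzv_gf (-1) (replicate k 1) x = (-1) ^ Suc k * (ln (1 + x) ^ Suc k / fact (Suc k))"
  using assms
proof (induction k arbitrary: x)
  case 0
  show ?case
  proof (rule eq_if_same_derivative_on_unit_interval[OF 0])
    show "continuous_on {0..x} (mzv_gf (-1) (replicate 0 1))"
      using 0 by (intro continuous_on_mzv_gf) auto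
    show "continuous_on {0..x} (\<lambda>x. (-1) ^ Suc 0 * (ln (1 + x) ^ Suc 0 / fact (Suc 0)))"
      using 0 by (intro continuous_intros) auto
    fix t :: real assume t: "0 < t" "t < 1"
    show "(mzv_gf (-1) (replicate 0 1) has_real_derivative (-1 / (1 + t))) (at t)"
      using mzv_gf_Nil_has_derivative[of "-1" t] t by (simp add: set_replicate_conv_if)
    show "((\<lambda>x. (-1) ^ Suc 0 * (ln (1 + x) ^ Suc 0 / fact (Suc 0))) has_real_derivative
            (-1 / (1 + t))) (at t)"
      using t by (auto intro!: derivative_eq_intros)
  qed simp
next
  case (Suc k)
  let ?g = "\<lambda>x. (-1) ^ Suc (Suc k) * (ln (1 + x) ^ Suc (Suc k) / fact (Suc (Suc k)))"
  show ?case
  proof (rule eq_if_same_derivative_on_unit_interval[OF Suc.prems])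
    show "continuous_on {0..x} (mzv_gf (-1) (replicate (Suc k) 1))"
      using Suc.prems by (intro continuous_on_mzv_gf) auto
    show "continuous_on {0..x} ?g" using Suc.prems by (intro continuous_intros) auto
    fix t :: real assume t: "0 < t" "t < 1"
    have "(mzv_gf (-1) (1 # replicate k 1) has_real_derivative
            -1 / (1 + t) * mzv_gf (-1) (replicate k 1) t) (at t)"
      using mzv_gf_Cons_has_derivative[of "-1" 1 "replicate k 1" t] t by (simp add: set_replicate_conv_if)
    then show "(mzv_gf (-1) (replicate (Suc k) 1) has_real_derivative
                 (-1) ^ Suc (Suc k) * (ln (1 + t) ^ Suc k / fact (Suc k) / (1 + t))) (at t)"
      using Suc.IH[of t] t by (simp add: field_simps)
    show "(?g has_real_derivative
             (-1) ^ Suc (Suc k) * (ln (1 + t) ^ Suc k / fact (Suc k) / (1 + t))) (at t)"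
      using t by (intro DERIV_cmult ln_one_plus_power_has_derivative) simp
  qed simp
qed

lemma mzv_gf_one_Nil:
  assumes "0 \<le> x" "x < 1"
  shows "mzv_gf 1 [] x = - ln (1 - x)"
proof (rule eq_if_same_derivative_on_unit_interval[OF assms])
  show "continuous_on {0..x} (mzv_gf 1 [])" using assms by (intro continuous_on_mzv_gf) auto
  show "continuous_on {0..x} (\<lambda>x. - ln (1 - x))" using assms by (intro continuous_intros) auto
  fix t :: real assume t: "0 < t" "t < 1"
  show "(mzv_gf 1 [] has_real_derivative (1 / (1 - t))) (at t)"
    using mzv_gf_Nil_has_derivative[of 1 t] t by (simp add: set_replicate_conv_if)
  show "((\<lambda>x. - ln (1 - x)) has_real_derivative (1 / (1 - t))) (at t)"
    using t by (auto intro!: derivative_eq_intros)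
qed simp

lemma mzv_gf_neg_neg:
  assumes "0 \<le> x" "x < 1"
  shows "mzv_gf (-1) [-1] x = Iint_partial 0 x"
proof (rule eq_if_same_derivative_on_unit_interval[OF assms])
  show "continuous_on {0..x} (mzv_gf (-1) [-1])" using assms by (intro continuous_on_mzv_gf) auto
  show "continuous_on {0..x} (Iint_partial 0)" using assms by (intro continuous_on_Iint_partial)
  fix t :: real assume t: "0 < t" "t < 1"
  have "(mzv_gf (-1) [-1] has_real_derivative -1 / (1 + t) * mzv_gf 1 [] t) (at t)"
    using mzv_gf_Cons_has_derivative[of "-1" "-1" "[]" t] t by (simp add: set_replicate_conv_if)
  then show "(mzv_gf (-1) [-1] has_real_derivative (ln (1 + t) ^ 0 * ln (1 - t) / (1 + t))) (at t)"
    using mzv_gf_one_Nil[of t] t by (simp add: set_replicate_conv_if)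
  show "(Iint_partial 0 has_real_derivative (ln (1 + t) ^ 0 * ln (1 - t) / (1 + t))) (at t)"
    by (rule Iint_partial_has_derivative[OF t])
qed simp

lemma mzv_gf_one_neg_ones:
  assumes "0 \<le> x" "x < 1"
  shows "mzv_gf 1 ((-1) # replicate k 1) x = (-1) ^ Suc k / fact (Suc k) *
           (real (Suc k) * Iint_partial k x - ln (1 + x) ^ Suc k * ln (1 - x))"
proof (rule eq_if_same_derivative_on_unit_interval[OF assms])
  show "continuous_on {0..x} (mzv_gf 1 ((-1) # replicate k 1))"
    using assms by (intro continuous_on_mzv_gf) auto
  show "continuous_on {0..x} (\<lambda>x. (-1) ^ Suc k / fact (Suc k) *
          (real (Suc k) * Iint_partial k x - ln (1 + x) ^ Suc k * ln (1 - x)))"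
    using assms by (intro continuous_intros continuous_on_Iint_partial) auto
  fix t :: real assume t: "0 < t" "t < 1"
  have "(mzv_gf 1 ((-1) # replicate k 1) has_real_derivative
          1 / (1 - t) * mzv_gf (-1) (replicate k 1) t) (at t)"
    using mzv_gf_Cons_has_derivative[of 1 "-1" "replicate k 1" t] t by (simp add: set_replicate_conv_if)
  then show "(mzv_gf 1 ((-1) # replicate k 1) has_real_derivative
           (-1) ^ Suc k / fact (Suc k) * (ln (1 + t) ^ Suc k / (1 - t))) (at t)"
    using mzv_gf_neg_ones[of t k] t by (simp add: mult_ac)
  have "((\<lambda>x. ln (1 + x)) has_real_derivative 1 / (1 + t)) (at t)"
    and "((\<lambda>x. ln (1 - x)) has_real_derivative -1 / (1 - t)) (at t)"
    using t by (auto intro!: derivative_eq_intros)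
  from DERIV_mult[OF DERIV_power[OF this(1), of "Suc k"] this(2)]
  have "((\<lambda>x. ln (1 + x) ^ Suc k * ln (1 - x)) has_real_derivative
          real (Suc k) * (ln (1 + t) ^ k * ln (1 - t) / (1 + t)) - ln (1 + t) ^ Suc k / (1 - t)) (at t)"
    by (simp add: field_simps)
  from DERIV_cmult[OF DERIV_diff[OF DERIV_cmult[OF Iint_partial_has_derivative[OF t, of k]] this],
      of "(-1) ^ Suc k / fact (Suc k)", of "real (Suc k)"]
  show "((\<lambda>x. (-1) ^ Suc k / fact (Suc k) *
          (real (Suc k) * Iint_partial k x - ln (1 + x) ^ Suc k * ln (1 - x))) has_real_derivative
           (-1) ^ Suc k / fact (Suc k) * (ln (1 + t) ^ Suc k / (1 - t))) (at t)"
    by (rule DERIV_cong) (simp add: algebra_simps)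
qed simp

definition alt_gf :: "nat \<Rightarrow> nat \<Rightarrow> real \<Rightarrow> real" where
  "alt_gf k j = mzv_gf (-1) (replicate j 1 @ [-1, -1] @ replicate k 1)"

definition alt_gf_pred :: "nat \<Rightarrow> nat \<Rightarrow> real \<Rightarrow> real" where
  "alt_gf_pred k j = (case j of 0 \<Rightarrow> mzv_gf 1 ((-1) # replicate k 1) | Suc i \<Rightarrow> alt_gf k i)"

lemma alt_gf_has_derivative:
  assumes "\<bar>t\<bar> < 1"
  shows "(alt_gf k j has_real_derivative - alt_gf_pred k j t / (1 + t)) (at t)"
proof (cases j)
  case 0
  then show ?thesis
    using mzv_gf_Cons_has_derivative[of "-1" "-1" "(-1) # replicate k 1" t] assms
    by (simp add: alt_gf_def alt_gf_pred_def set_replicate_conv_if)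
next
  case (Suc i)
  then show ?thesis
    using mzv_gf_Cons_has_derivative[of "-1" 1 "replicate i 1 @ [-1, -1] @ replicate k 1" t] assms
    by (simp add: alt_gf_def alt_gf_pred_def set_replicate_conv_if)
qed

lemma continuous_on_alt_gf: "0 \<le> x \<Longrightarrow> x < 1 \<Longrightarrow> continuous_on {0..x} (alt_gf k j)"
  unfolding alt_gf_def by (rule continuous_on_mzv_gf) (auto simp: set_replicate_conv_if)

definition alt_gf_sum :: "nat \<Rightarrow> nat \<Rightarrow> real \<Rightarrow> real" where
  "alt_gf_sum m k x = (\<Sum>i\<le>m. ln (1 + x) ^ i / fact i * alt_gf k (m - i) x)"

definition Iint_comb :: "nat \<Rightarrow> nat \<Rightarrow> real \<Rightarrow> real" where
  "Iint_comb m k x = (-1) ^ k / (fact (Suc m) * fact (Suc k)) *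
     (real (Suc k) * ln (1 + x) ^ Suc m * Iint_partial k x
      - real (m + k + 2) * Iint_partial (m + k + 1) x)"

lemma alt_gf_sum_has_derivative:
  assumes t: "0 < t" "t < 1"
  shows "(alt_gf_sum m k has_real_derivative
           - (ln (1 + t) ^ m / fact m * alt_gf_pred k 0 t / (1 + t))) (at t)"
proof -
  \<comment> \<open>the derivative of the i-th summand is A i - A (Suc i)\<close>
  define A where
    "A i = real i * ln (1 + t) ^ (i - 1) / fact i * alt_gf_pred k (Suc m - i) t / (1 + t)" for i
  have A_Suc: "A (Suc i) = ln (1 + t) ^ i / fact i * alt_gf_pred k (m - i) t / (1 + t)" for i
    by (simp add: A_def fact_Suc)
  have ln: "((\<lambda>x. ln (1 + x)) has_real_derivative 1 / (1 + t)) (at t)"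
    using t by (auto intro!: derivative_eq_intros)
  have "(alt_gf_sum m k has_real_derivative
      (\<Sum>i\<le>m. real i * (1 / (1 + t) * ln (1 + t) ^ (i - Suc 0)) / fact i * alt_gf k (m - i) t
               + - alt_gf_pred k (m - i) t / (1 + t) * (ln (1 + t) ^ i / fact i))) (at t)"
    unfolding alt_gf_sum_def[abs_def] using t
    by (intro DERIV_sum DERIV_mult DERIV_cdivide DERIV_power[OF ln] alt_gf_has_derivative) auto
  also have "(\<Sum>i\<le>m. real i * (1 / (1 + t) * ln (1 + t) ^ (i - Suc 0)) / fact i * alt_gf k (m - i) t
               + - alt_gf_pred k (m - i) t / (1 + t) * (ln (1 + t) ^ i / fact i))
           = (\<Sum>i\<le>m. A i - A (Suc i))"
  proof (rule sum.cong[OF refl])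
    fix i assume "i \<in> {..m}"
    then have "alt_gf_pred k (Suc m - i) t = alt_gf k (m - i) t"
      by (simp add: alt_gf_pred_def Suc_diff_le)
    then show "real i * (1 / (1 + t) * ln (1 + t) ^ (i - Suc 0)) / fact i * alt_gf k (m - i) t
               + - alt_gf_pred k (m - i) t / (1 + t) * (ln (1 + t) ^ i / fact i) = A i - A (Suc i)"
      unfolding A_Suc by (simp add: A_def mult_ac)
  qed
  also have "\<dots> = A 0 - A (Suc m)" by (rule sum_telescope)
  also have "\<dots> = - (ln (1 + t) ^ m / fact m * alt_gf_pred k 0 t / (1 + t))"
    unfolding A_Suc by (simp add: A_def)
  finally show ?thesis .
qed

lemma Iint_comb_has_derivative:
  assumes t: "0 < t" "t < 1"
  shows "(Iint_comb m k has_real_derivative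
           - (ln (1 + t) ^ m / fact m * alt_gf_pred k 0 t / (1 + t))) (at t)"
proof -
  have ln: "((\<lambda>x. ln (1 + x)) has_real_derivative 1 / (1 + t)) (at t)"
    using t by (auto intro!: derivative_eq_intros)
  have dL: "((\<lambda>x. ln (1 + x) ^ Suc m) has_real_derivative
      real (Suc m) * (1 / (1 + t) * ln (1 + t) ^ m)) (at t)"
    using DERIV_power[OF ln, of "Suc m"] by simp
  define E where "E = real (Suc k) * Iint_partial k t - ln (1 + t) ^ Suc k * ln (1 - t)"
  have "(Iint_comb m k has_real_derivative
      (-1) ^ k / (fact (Suc m) * fact (Suc k)) *
      (real (Suc k) * (real (Suc m) * (1 / (1 + t) * ln (1 + t) ^ m)) * Iint_partial k t
       + ln (1 + t) ^ k * ln (1 - t) / (1 + t) * (real (Suc k) * ln (1 + t) ^ Suc m)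
       - real (m + k + 2) * (ln (1 + t) ^ (m + k + 1) * ln (1 - t) / (1 + t)))) (at t)"
    unfolding Iint_comb_def[abs_def]
    by (intro DERIV_cmult DERIV_diff DERIV_mult dL Iint_partial_has_derivative[OF t])
  also have "(-1) ^ k / (fact (Suc m) * fact (Suc k)) *
      (real (Suc k) * (real (Suc m) * (1 / (1 + t) * ln (1 + t) ^ m)) * Iint_partial k t
       + ln (1 + t) ^ k * ln (1 - t) / (1 + t) * (real (Suc k) * ln (1 + t) ^ Suc m)
       - real (m + k + 2) * (ln (1 + t) ^ (m + k + 1) * ln (1 - t) / (1 + t)))
    = (-1) ^ k / (fact (Suc m) * fact (Suc k)) * (real (Suc m) * (ln (1 + t) ^ m / (1 + t) * E))"
  proof -
    have X: "real (Suc k) * (real (Suc m) * (1 / p * L ^ m)) * J + L ^ k * l / p * (real (Suc k) * L ^ Suc m)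
        - real (m + k + 2) * (L ^ (m + k + 1) * l / p)
        = real (Suc m) * (L ^ m / p * (real (Suc k) * J - L ^ Suc k * l))"
      if "p \<noteq> 0" for p L J l :: real
      using that by (simp add: field_simps power_add)
    have "1 + t \<noteq> 0" using t by simp
    from X[OF this] show ?thesis unfolding E_def by (simp only:)
  qed
  also have "\<dots> = (-1) ^ k / (fact m * fact (Suc k)) * (ln (1 + t) ^ m / (1 + t) * E)"
    by (simp add: fact_Suc[of m] del: of_nat_Suc)
  also have "\<dots> = - (ln (1 + t) ^ m / fact m * alt_gf_pred k 0 t / (1 + t))"
    using t by (simp add: alt_gf_pred_def mzv_gf_one_neg_ones E_def field_simps)
  finally show ?thesis .
qed

lemma alt_gf_sum_eq_Iint_comb:
  assumes "0 \<le> x" "x < 1"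
  shows "alt_gf_sum m k x = Iint_comb m k x"
proof (rule eq_if_same_derivative_on_unit_interval[OF assms])
  show "continuous_on {0..x} (alt_gf_sum m k)"
    unfolding alt_gf_sum_def[abs_def] using assms by (intro continuous_intros continuous_on_alt_gf) auto
  show "continuous_on {0..x} (Iint_comb m k)"
    unfolding Iint_comb_def[abs_def] using assms
    by (intro continuous_intros continuous_on_Iint_partial) auto
  fix t :: real assume t: "0 < t" "t < 1"
  show "(alt_gf_sum m k has_real_derivative
          - (ln (1 + t) ^ m / fact m * alt_gf_pred k 0 t / (1 + t))) (at t)"
    by (rule alt_gf_sum_has_derivative[OF t])
  show "(Iint_comb m k has_real_derivative
          - (ln (1 + t) ^ m / fact m * alt_gf_pred k 0 t / (1 + t))) (at t)"
    by (rule Iint_comb_has_derivative[OF t])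
qed (simp add: alt_gf_sum_def Iint_comb_def alt_gf_def)

section \<open>Boundary values at 1\<close>

lemma mzv_gf_tendsto_mzv:
  assumes "set r \<subseteq> {1, -1}"
  shows "(mzv_gf (-1) r \<longlongrightarrow> mzv ((-1) # r)) (at_left 1)"
  unfolding mzv_gf_def[abs_def]
  by (rule Abel_limit_theorem[OF mzv_coeff_sums_mzv[OF summable_mzv_coeff_neg[OF assms]]])

lemma continuous_on_one_minus_times_ln_one_minus:
  "continuous_on {0..1} (\<lambda>x::real. (1 - x) * ln (1 - x))"
proof (rule continuous_on_IccI)
  show "((\<lambda>x::real. (1 - x) * ln (1 - x)) \<longlongrightarrow> (1 - 0) * ln (1 - 0)) (at_right 0)"
    by real_asymp
  show "((\<lambda>x::real. (1 - x) * ln (1 - x)) \<longlongrightarrow> (1 - 1) * ln (1 - 1)) (at_left 1)"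
    by real_asymp
  show "((\<lambda>x::real. (1 - x) * ln (1 - x)) \<longlongrightarrow> (1 - x) * ln (1 - x)) (at x)"
    if "0 < x" "x < 1" for x :: real
    using that by (intro tendsto_intros) auto
qed simp

lemma ln_one_minus_has_integral: "((\<lambda>x::real. ln (1 - x)) has_integral -1) {0..1}"
proof -
  define G where "G x = - ((1 - x) * ln (1 - x)) - x" for x :: real
  have "((\<lambda>x::real. ln (1 - x)) has_integral (G 1 - G 0)) {0..1}"
  proof (rule fundamental_theorem_of_calculus_interior)
    show "continuous_on {0..1} G"
      unfolding G_def by (intro continuous_intros continuous_on_one_minus_times_ln_one_minus)
    show "(G has_vector_derivative ln (1 - x)) (at x)" if "x \<in> {0<..<1}" for x
      unfolding G_def has_real_derivative_iff_has_vector_derivative[symmetric]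
      using that by (auto intro!: derivative_eq_intros simp: divide_simps)
  qed simp
  then show ?thesis by (simp add: G_def)
qed

lemma Iint_integrand_integrable:
  "(\<lambda>x::real. ln (1 + x) ^ n * ln (1 - x) / (1 + x)) integrable_on {0..1}"
proof -
  have "(\<lambda>x::real. ln (1 - x)) integrable_on {0..1}" using ln_one_minus_has_integral by blast
  moreover have "(\<lambda>x::real. norm (ln (1 - x))) integrable_on {0..1}"
    using integrable_neg[OF calculation] by (rule integrable_eq) (auto simp: ln_le_zero_iff less_eq_real_def)
  ultimately have g: "(\<lambda>x::real. ln (1 - x)) absolutely_integrable_on {0..1}"
    unfolding absolutely_integrable_on_def by blast
  have f: "continuous_on {0..1} (\<lambda>x::real. ln (1 + x) ^ n / (1 + x))"
    by (intro continuous_intros) auto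
  have "(\<lambda>x::real. ln (1 + x) ^ n / (1 + x) * ln (1 - x)) absolutely_integrable_on {0..1}"
  proof (rule absolutely_integrable_bounded_measurable_product_real[OF _ _ _ g])
    show "(\<lambda>x::real. ln (1 + x) ^ n / (1 + x)) \<in> borel_measurable (lebesgue_on {0..1})"
      by (rule continuous_imp_measurable_on_sets_lebesgue[OF f]) simp
    show "bounded ((\<lambda>x::real. ln (1 + x) ^ n / (1 + x)) ` {0..1})"
      by (rule compact_imp_bounded, rule compact_continuous_image[OF f]) simp
  qed simp
  then show ?thesis by (simp add: absolutely_integrable_on_def field_simps)
qed

lemma Iint_partial_tendsto: "(Iint_partial n \<longlongrightarrow> Iint_partial n 1) (at_left 1)"
proof -
  have "continuous_on {0..1} (Iint_partial n)"
    unfolding Iint_partial_def[abs_def]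
    by (rule indefinite_integral_continuous_1[OF Iint_integrand_integrable])
  then show ?thesis by (rule continuous_on_Icc_at_leftD) simp
qed

lemma mzv_trunc_neg_neg:
  "mzv_trunc [-1, -1] N =
     ((\<Sum>n\<in>{1..N}. (-1) ^ n / real n) ^ 2 - (\<Sum>n\<in>{1..N}. 1 / real n ^ 2)) / 2"
proof (induction N)
  case 0
  then show ?case by simp
next
  case (Suc N)
  let ?S = "\<Sum>n\<in>{1..N}. (-1) ^ n / real n" and ?a = "(-1) ^ Suc N / real (Suc N) :: real"
  have "?a ^ 2 = 1 / real (Suc N) ^ 2"
    by (simp add: power_divide power_mult_distrib[symmetric] power_mult[symmetric] mult.commute[of _ 2])
  moreover have "((S + a) ^ 2 - (Q + b)) / 2 = (S ^ 2 - Q) / 2 + a * S" if "a ^ 2 = b" for S Q a b :: real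
    using that by (simp add: power2_eq_square field_simps)
  ultimately have "((?S + ?a) ^ 2 - ((\<Sum>n\<in>{1..N}. 1 / real n ^ 2) + 1 / real (Suc N) ^ 2)) / 2
      = mzv_trunc [-1, -1] N + ?a * ?S"
    unfolding Suc by blast
  then show ?case by simp
qed

lemma mzv_neg_neg: "mzv [-1, -1] = (ln 2 ^ 2 - zeta2) / 2"
proof -
  have "(\<lambda>N. - (\<Sum>n<N. (-1) ^ n / real (Suc n))) \<longlonglongrightarrow> - ln 2"
    using alternating_harmonic_series_sums unfolding sums_def by (rule tendsto_minus)
  then have alt: "(\<lambda>N. \<Sum>n\<in>{1..N}. (-1) ^ n / real n) \<longlonglongrightarrow> - ln 2"
    by (simp add: sum.atLeast1_atMost_eq sum_negf)
  have "summable (\<lambda>n. 1 / real (Suc n) ^ 2)"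
    using inverse_power_summable[of 2, where 'a = real]
    by (subst summable_Suc_iff) (simp add: divide_inverse)
  then have "(\<lambda>N. \<Sum>n<N. 1 / real (Suc n) ^ 2) \<longlonglongrightarrow> zeta2"
    unfolding zeta2_def by (rule summable_LIMSEQ)
  then have sq: "(\<lambda>N. \<Sum>n\<in>{1..N}. 1 / real n ^ 2) \<longlonglongrightarrow> zeta2"
    by (simp add: sum.atLeast1_atMost_eq)
  have "mzv_trunc [-1, -1] \<longlonglongrightarrow> ((- ln 2) ^ 2 - zeta2) / 2"
    unfolding mzv_trunc_neg_neg[abs_def] by (intro tendsto_intros alt sq) simp
  then show ?thesis unfolding mzv_def by (simp add: limI)
qed

(* For n = 0 the integral is not the defining value of Iint; the two agree because both equal
   zeta(-1, -1), once as an Abel limit and once as the limit of its partial sums. *)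
lemma Iint_partial_1: "Iint_partial n 1 = Iint n"
proof (cases "n = 0")
  case True
  have "(mzv_gf (-1) [-1] \<longlongrightarrow> mzv [-1, -1]) (at_left 1)" by (rule mzv_gf_tendsto_mzv) simp
  moreover have "eventually (\<lambda>x. mzv_gf (-1) [-1] x = Iint_partial 0 x) (at_left (1::real))"
    using eventually_at_left_real[OF zero_less_one] by (rule eventually_mono) (rule mzv_gf_neg_neg; simp)
  ultimately have "(Iint_partial 0 \<longlongrightarrow> mzv [-1, -1]) (at_left 1)"
    by (rule Lim_transform_eventually)
  then have "Iint_partial 0 1 = mzv [-1, -1]"
    using Iint_partial_tendsto[of 0] by (intro tendsto_unique) auto
  then show ?thesis using True mzv_neg_neg by (simp add: Iint_def)
qed (simp add: Iint_def Iint_partial_def)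

lemma alt_gf_tendsto_mzv:
  "(alt_gf k j \<longlongrightarrow> mzv ((-1) # replicate j 1 @ [-1, -1] @ replicate k 1)) (at_left 1)"
  unfolding alt_gf_def[abs_def] by (rule mzv_gf_tendsto_mzv) (auto simp: set_replicate_conv_if)

lemma sum_mzv_eq:
  "(\<Sum>i\<le>m. ln 2 ^ i / fact i * mzv ((-1) # replicate (m - i) 1 @ [-1, -1] @ replicate k 1)) =
    (-1) ^ k / (fact (Suc m) * fact (Suc k)) *
      (real (Suc k) * ln 2 ^ Suc m * Iint k - real (m + k + 2) * Iint (m + k + 1))"
proof (rule tendsto_unique[OF trivial_limit_at_left_real])
  have ln: "((\<lambda>x::real. ln (1 + x)) \<longlongrightarrow> ln 2) (at_left 1)"
  proof -
    have "((\<lambda>x::real. ln (1 + x)) \<longlongrightarrow> ln (1 + 1)) (at_left 1)" by (intro tendsto_intros) auto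
    then show ?thesis by simp
  qed
  show "(alt_gf_sum m k \<longlongrightarrow>
      (\<Sum>i\<le>m. ln 2 ^ i / fact i * mzv ((-1) # replicate (m - i) 1 @ [-1, -1] @ replicate k 1)))
      (at_left 1)"
    unfolding alt_gf_sum_def[abs_def]
    by (intro tendsto_sum tendsto_mult tendsto_divide tendsto_power ln alt_gf_tendsto_mzv tendsto_const)
      auto
  have "(Iint_comb m k \<longlongrightarrow> (-1) ^ k / (fact (Suc m) * fact (Suc k)) *
      (real (Suc k) * ln 2 ^ Suc m * Iint k - real (m + k + 2) * Iint (m + k + 1))) (at_left 1)"
    unfolding Iint_comb_def[abs_def] Iint_partial_1[symmetric]
    by (intro tendsto_mult tendsto_diff tendsto_power ln Iint_partial_tendsto tendsto_const)
  moreover have "eventually (\<lambda>x. Iint_comb m k x = alt_gf_sum m k x) (at_left 1)"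
    using eventually_at_left_real[OF zero_less_one]
    by (rule eventually_mono) (rule alt_gf_sum_eq_Iint_comb[symmetric]; simp)
  ultimately show "(alt_gf_sum m k \<longlongrightarrow> (-1) ^ k / (fact (Suc m) * fact (Suc k)) *
      (real (Suc k) * ln 2 ^ Suc m * Iint k - real (m + k + 2) * Iint (m + k + 1))) (at_left 1)"
    by (rule Lim_transform_eventually)
qed

theorem theorem3p5:
  fixes m k :: nat
  shows "mzv ([-1] @ replicate m 1 @ [-1, -1] @ replicate k 1) =
    (-1) ^ k / (fact (m + 1) * fact (k + 1)) *
      (real (k + 1) * ln 2 ^ (m + 1) * Iint k - real (m + k + 2) * Iint (m + k + 1))
    - (\<Sum>i = 1..m. ln 2 ^ i / fact i * mzv ([-1] @ replicate (m - i) 1 @ [-1, -1] @ replicate k 1))"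
proof -
  let ?Z = "\<lambda>j. mzv ([-1] @ replicate j 1 @ [-1, -1] @ replicate k 1)"
  have "(\<Sum>i\<le>m. ln 2 ^ i / fact i * ?Z (m - i)) = ?Z m + (\<Sum>i = 1..m. ln 2 ^ i / fact i * ?Z (m - i))"
    by (simp add: sum.atMost_shift sum.atLeast1_atMost_eq del: sum.atMost_Suc)
  then show ?thesis using sum_mzv_eq[of m k] by simp
qed

end
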